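(* Let $X$ be an $n\times n$ complex matrix and $Y$ an $m\times m$ complex matrix, and let $M=\begin{bmatrix} X & J_{nm} \\ J_{mn} & Y\end{bmatrix}$, where $J_{nm}$ denotes the $n\times m$ all-ones matrix, and write $J$ for a square all-ones matrix of the appropriate size. Then: (1) the spectra of $M$ and $J-M$ are determined by the spectra of $X$, $J-X$, $Y$ and $J-Y$; (2) the spectra of $X$ and $J-X$ are determined by the spectra of $M$, $J-M$, $Y$ and $J-Y$. Here "determined" means: if $X'$ ($n'\times n'$), $Y'$ ($m'\times m'$) and $M'$ are another such triple, then in (1) equality of the spectra (as multisets) of $X,J-X,Y,J-Y$ with those of $X',J-X',Y',J-Y'$ implies equality of the spectra of $M, J-M$ with those of $M', J-M'$, and in (2) equality of the spectra of $M,J-M,Y,J-Y$ with those of $M',J-M',Y',J-Y'$ implies equality of the spectra of $X, J-X$ with those of $X',J-X'$. *)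

theory Defs
  imports "Jordan_Normal_Form.Char_Poly" "HOL-Computational_Algebra.Polynomial"
begin

definition spec_mset :: "complex mat \<Rightarrow> complex multiset" where
  "spec_mset A = proots (char_poly A)"

definition ones_mat :: "nat \<Rightarrow> nat \<Rightarrow> complex mat" where
  "ones_mat r c = mat r c (\<lambda>_. 1)"

definition compl_mat :: "complex mat \<Rightarrow> complex mat" where
  "compl_mat A = ones_mat (dim_row A) (dim_col A) - A"

definition join_mat :: "complex mat \<Rightarrow> complex mat \<Rightarrow> complex mat" where
  "join_mat X Y = four_block_mat X (ones_mat (dim_row X) (dim_col Y))
                                  (ones_mat (dim_row Y) (dim_col X)) Y"

end

theory Submission
  imports Defs
begin

text \<open>Write \<open>\<chi>(A)\<close> for the characteristic polynomial. The complement \<open>J - M\<close> is block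
  diagonal with blocks \<open>J - X\<close> and \<open>J - Y\<close>, so \<open>\<chi>(J - M) = \<chi>(J - X) \<chi>(J - Y)\<close>. For \<open>M\<close>
  itself, a Schur complement together with the matrix determinant lemma for the rank-one matrix \<open>J\<close>
  gives \<open>\<chi>(M) = \<chi>(X) \<chi>(Y) - (\<chi>(X - J) - \<chi>(X)) (\<chi>(Y - J) - \<chi>(Y))\<close> at every \<open>s\<close> where
  \<open>sI - X\<close> and \<open>sI - Y\<close> are invertible, hence as polynomials. Since \<open>X - J = -(J - X)\<close>,
  \<open>\<chi>(X - J)\<close> is determined by \<open>\<chi>(J - X)\<close>. For (2), cancel
  \<open>\<chi>(J - Y) \<noteq> 0\<close> in the first identity; the second is affine in \<open>\<chi>(X)\<close> with leading
  coefficient \<open>\<chi>(Y - J) \<noteq> 0\<close>. Over \<open>\<complex>\<close>, spectrum and characteristic polynomial determine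
  each other.\<close>

lemma det_nonzero_imp_right_inverse:
  fixes A :: "'a :: field mat"
  assumes A: "A \<in> carrier_mat n n" and "det A \<noteq> 0"
  obtains A' where "A' \<in> carrier_mat n n" and "A * A' = 1\<^sub>m n"
proof
  show "(1 / det A) \<cdot>\<^sub>m adj_mat A \<in> carrier_mat n n" using adj_mat(1)[OF A] by auto
  have "A * ((1 / det A) \<cdot>\<^sub>m adj_mat A) = (1 / det A) \<cdot>\<^sub>m (A * adj_mat A)"
    by (rule mult_smult_distrib[OF A adj_mat(1)[OF A]])
  also have "\<dots> = 1\<^sub>m n" unfolding adj_mat(2)[OF A] using \<open>det A \<noteq> 0\<close> by (intro eq_matI, auto)
  finally show "A * ((1 / det A) \<cdot>\<^sub>m adj_mat A) = 1\<^sub>m n" .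
qed

lemma det_four_block_mat_schur_upper_left:
  fixes A :: "'a :: field mat"
  assumes A: "A \<in> carrier_mat n n" and B: "B \<in> carrier_mat n m" and C: "C \<in> carrier_mat m n"
    and D: "D \<in> carrier_mat m m" and A': "A' \<in> carrier_mat n n" and inv: "A * A' = 1\<^sub>m n"
  shows "det (four_block_mat A B C D) = det A * det (D - C * (A' * B))"
proof -
  define E where "E = four_block_mat (1\<^sub>m n) (- (A' * B)) (0\<^sub>m m n) (1\<^sub>m m)"
  have A'B: "A' * B \<in> carrier_mat n m" using A' B by auto
  have E: "E \<in> carrier_mat (n + m) (n + m)" unfolding E_def using A'B by auto
  have "det E = 1" unfolding E_def
    by (subst det_four_block_mat_lower_left_zero[of _ n _ m]) (use A'B in auto)
  have "A * (A' * B) = B" using A A' B inv by (simp flip: assoc_mult_mat[OF A A' B])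
  then have "A * - (A' * B) + B * 1\<^sub>m m = 0\<^sub>m n m" using A A' B by simp
  moreover have "C * - (A' * B) + D * 1\<^sub>m m = D - C * (A' * B)"
    using C D A' B by (simp, intro eq_matI, auto)
  ultimately have prod:
    "four_block_mat A B C D * E = four_block_mat A (0\<^sub>m n m) C (D - C * (A' * B))"
    unfolding E_def mult_four_block_mat[OF A B C D one_carrier_mat uminus_carrier_mat[OF A'B]
        zero_carrier_mat one_carrier_mat]
    using A B C D by simp
  have "det (four_block_mat A B C D) = det (four_block_mat A B C D * E)"
    using det_mult[OF _ E, of "four_block_mat A B C D"] A B C D \<open>det E = 1\<close> by simp
  also have "\<dots> = det A * det (D - C * (A' * B))" unfolding prod
    by (rule det_four_block_mat_upper_right_zero[OF A refl])
      (use C D A'B in \<open>auto intro!: minus_carrier_mat\<close>)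
  finally show ?thesis .
qed

lemma det_four_block_mat_schur_lower_right:
  fixes A :: "'a :: field mat"
  assumes A: "A \<in> carrier_mat n n" and B: "B \<in> carrier_mat n m" and C: "C \<in> carrier_mat m n"
    and D: "D \<in> carrier_mat m m" and D': "D' \<in> carrier_mat m m" and inv: "D * D' = 1\<^sub>m m"
  shows "det (four_block_mat A B C D) = det D * det (A - B * (D' * C))"
proof -
  define E where "E = four_block_mat (1\<^sub>m n) (0\<^sub>m n m) (- (D' * C)) (1\<^sub>m m)"
  have D'C: "D' * C \<in> carrier_mat m n" using D' C by auto
  have E: "E \<in> carrier_mat (n + m) (n + m)" unfolding E_def using D'C by auto
  have "det E = 1" unfolding E_def
    by (subst det_four_block_mat_upper_right_zero[of _ n _ m]) (use D'C in auto)
  have "D * (D' * C) = C" using D D' C inv by (simp flip: assoc_mult_mat[OF D D' C])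
  then have "C * 1\<^sub>m n + D * - (D' * C) = 0\<^sub>m m n"
    using C D D' by (simp add: add_uminus_minus_mat)
  moreover have "A * 1\<^sub>m n + B * - (D' * C) = A - B * (D' * C)"
    using A B D' C by (simp, intro eq_matI, auto)
  ultimately have prod:
    "four_block_mat A B C D * E = four_block_mat (A - B * (D' * C)) B (0\<^sub>m m n) D"
    unfolding E_def mult_four_block_mat[OF A B C D one_carrier_mat zero_carrier_mat
        uminus_carrier_mat[OF D'C] one_carrier_mat]
    using A B C D by simp
  have "det (four_block_mat A B C D) = det (four_block_mat A B C D * E)"
    using det_mult[OF _ E, of "four_block_mat A B C D"] A B C D \<open>det E = 1\<close> by simp
  also have "\<dots> = det (A - B * (D' * C)) * det D" unfolding prod
    by (rule det_four_block_mat_lower_left_zero)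
      (use A B D D'C in \<open>auto intro!: minus_carrier_mat\<close>)
  finally show ?thesis by simp
qed

definition sum_mat :: "'a :: comm_monoid_add mat \<Rightarrow> 'a" where
  "sum_mat A = (\<Sum>i<dim_row A. \<Sum>j<dim_col A. A $$ (i, j))"

lemma det_minus_smult_ones_mat:
  assumes P: "P \<in> carrier_mat n n" and P': "P' \<in> carrier_mat n n" and inv: "P * P' = 1\<^sub>m n"
  shows "det (P - c \<cdot>\<^sub>m ones_mat n n) = det P * (1 - c * sum_mat P')"
proof -
  define N where "N = four_block_mat P (ones_mat n 1) (c \<cdot>\<^sub>m ones_mat 1 n) (1\<^sub>m 1)"
  have u: "ones_mat n 1 \<in> carrier_mat n 1" and v: "c \<cdot>\<^sub>m ones_mat 1 n \<in> carrier_mat 1 n"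
    by (auto simp: ones_mat_def)
  have "det N = det (P - ones_mat n 1 * (1\<^sub>m 1 * (c \<cdot>\<^sub>m ones_mat 1 n)))"
    unfolding N_def by (subst det_four_block_mat_schur_lower_right[OF P u v]) auto
  also have "P - ones_mat n 1 * (1\<^sub>m 1 * (c \<cdot>\<^sub>m ones_mat 1 n)) = P - c \<cdot>\<^sub>m ones_mat n n"
    using P by (intro eq_matI) (auto simp: ones_mat_def scalar_prod_def)
  finally have "det (P - c \<cdot>\<^sub>m ones_mat n n) = det N" ..
  also have "det N = det P * det (1\<^sub>m 1 - c \<cdot>\<^sub>m ones_mat 1 n * (P' * ones_mat n 1))"
    unfolding N_def by (rule det_four_block_mat_schur_upper_left[OF P u v _ P' inv]) auto
  also have "det (1\<^sub>m 1 - c \<cdot>\<^sub>m ones_mat 1 n * (P' * ones_mat n 1)) = 1 - c * sum_mat P'"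
    using P' by (subst det_upper_triangular[of _ 1])
      (auto simp: upper_triangular_def diag_mat_def ones_mat_def scalar_prod_def sum_mat_def
        sum_distrib_left atLeast0LessThan)
  finally show ?thesis .
qed

lemma det_four_block_mat_minus_ones:
  fixes P Q :: "complex mat"
  assumes P: "P \<in> carrier_mat n n" and Q: "Q \<in> carrier_mat m m"
    and "det P \<noteq> 0" and "det Q \<noteq> 0"
  shows "det (four_block_mat P (- ones_mat n m) (- ones_mat m n) Q) =
    det P * det Q - (det (P + ones_mat n n) - det P) * (det (Q + ones_mat m m) - det Q)"
proof -
  obtain P' where P': "P' \<in> carrier_mat n n" and iP: "P * P' = 1\<^sub>m n"
    using det_nonzero_imp_right_inverse[OF P \<open>det P \<noteq> 0\<close>] .
  obtain Q' where Q': "Q' \<in> carrier_mat m m" and iQ: "Q * Q' = 1\<^sub>m m"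
    using det_nonzero_imp_right_inverse[OF Q \<open>det Q \<noteq> 0\<close>] .
  have plus_ones: "det (R + ones_mat k k) = det R * (1 + sum_mat R')"
    if "R \<in> carrier_mat k k" "R' \<in> carrier_mat k k" "R * R' = 1\<^sub>m k" for R R' k
  proof -
    have "R + ones_mat k k = R - (-1) \<cdot>\<^sub>m ones_mat k k"
      using that(1) by (intro eq_matI) (auto simp: ones_mat_def)
    then show ?thesis using det_minus_smult_ones_mat[OF that, of "-1"] by simp
  qed
  have "det (four_block_mat P (- ones_mat n m) (- ones_mat m n) Q)
      = det P * det (Q - (- ones_mat m n) * (P' * (- ones_mat n m)))"
    by (rule det_four_block_mat_schur_upper_left[OF P _ _ Q P' iP]) (auto simp: ones_mat_def)
  also have "(- ones_mat m n) * (P' * (- ones_mat n m)) = sum_mat P' \<cdot>\<^sub>m ones_mat m m"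
    using P' by (intro eq_matI)
      (auto simp: ones_mat_def scalar_prod_def sum_mat_def sum_distrib_left sum_negf atLeast0LessThan)
  also have "det (Q - sum_mat P' \<cdot>\<^sub>m ones_mat m m) = det Q * (1 - sum_mat P' * sum_mat Q')"
    by (rule det_minus_smult_ones_mat[OF Q Q' iQ])
  finally show ?thesis
    unfolding plus_ones[OF P P' iP] plus_ones[OF Q Q' iQ] by (simp add: algebra_simps)
qed

lemma poly_char_poly_eq_det:
  fixes A :: "'a :: field mat"
  assumes A: "A \<in> carrier_mat n n"
  shows "poly (char_poly A) s = det (s \<cdot>\<^sub>m 1\<^sub>m n - A)"
proof -
  have "- char_matrix A s = s \<cdot>\<^sub>m 1\<^sub>m n - A"
    using A by (intro eq_matI) (auto simp: char_matrix_def)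
  then show ?thesis using char_poly_matrix[OF A, of s] by simp
qed

lemma char_poly_nonzero: "A \<in> carrier_mat n n \<Longrightarrow> char_poly A \<noteq> 0"
  using degree_monic_char_poly[of A n] by auto

lemma char_poly_four_block_mat_diag:
  fixes A :: "'a :: idom mat"
  assumes A: "A \<in> carrier_mat n n" and D: "D \<in> carrier_mat m m"
  shows "char_poly (four_block_mat A (0\<^sub>m n m) (0\<^sub>m m n) D) = char_poly A * char_poly D"
proof -
  have "char_poly_matrix (four_block_mat A (0\<^sub>m n m) (0\<^sub>m m n) D)
      = four_block_mat (char_poly_matrix A) (0\<^sub>m n m) (0\<^sub>m m n) (char_poly_matrix D)"
    using A D by (intro eq_matI) (auto simp: char_poly_matrix_def)
  then show ?thesis
    unfolding char_poly_def by (metis det_four_block_mat_upper_right_zero char_poly_matrix_closed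
        zero_carrier_mat A D)
qed

lemma poly_eqI_off_roots:
  fixes p q r :: "'a :: {idom, ring_char_0} poly"
  assumes "r \<noteq> 0" and "\<And>s. poly r s \<noteq> 0 \<Longrightarrow> poly p s = poly q s"
  shows "p = q"
proof -
  have "poly (r * (p - q)) = poly 0" using assms(2) by (auto simp: fun_eq_iff)
  then have "r * (p - q) = 0" by (simp only: poly_eq_poly_eq_iff)
  then show ?thesis using \<open>r \<noteq> 0\<close> by simp
qed

lemma char_poly_uminus_mat:
  fixes A :: "'a :: field_char_0 mat"
  assumes A: "A \<in> carrier_mat n n"
  shows "char_poly (- A) = Polynomial.smult ((-1) ^ n) (char_poly A \<circ>\<^sub>p [:0, -1:])"
proof -
  have "poly (char_poly (- A)) s = poly (Polynomial.smult ((-1) ^ n) (char_poly A \<circ>\<^sub>p [:0, -1:])) s"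
    for s
  proof -
    have "s \<cdot>\<^sub>m 1\<^sub>m n - - A = (-1) \<cdot>\<^sub>m ((- s) \<cdot>\<^sub>m 1\<^sub>m n - A)"
      using A by (intro eq_matI) auto
    then show ?thesis
      using A by (simp add: poly_char_poly_eq_det[of _ n] poly_pcompose)
  qed
  then show ?thesis by (simp add: poly_eq_poly_eq_iff[symmetric] fun_eq_iff)
qed

lemma char_poly_uminus_eq:
  fixes A B :: "'a :: field_char_0 mat"
  assumes A: "A \<in> carrier_mat n n" and B: "B \<in> carrier_mat k k"
    and eq: "char_poly A = char_poly B"
  shows "char_poly (- A) = char_poly (- B)"
proof -
  have "n = k" using degree_monic_char_poly[OF A] degree_monic_char_poly[OF B] eq by simp
  then show ?thesis using A B eq by (simp add: char_poly_uminus_mat)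
qed

lemma compl_mat_carrier [simp]: "A \<in> carrier_mat n n \<Longrightarrow> compl_mat A \<in> carrier_mat n n"
  by (auto simp: compl_mat_def ones_mat_def)

lemma join_mat_carrier [simp]:
  "X \<in> carrier_mat n n \<Longrightarrow> Y \<in> carrier_mat m m \<Longrightarrow> join_mat X Y \<in> carrier_mat (n + m) (n + m)"
  by (auto simp: join_mat_def ones_mat_def)

lemma compl_mat_join_mat:
  assumes "X \<in> carrier_mat n n" and "Y \<in> carrier_mat m m"
  shows "compl_mat (join_mat X Y) = four_block_mat (compl_mat X) (0\<^sub>m n m) (0\<^sub>m m n) (compl_mat Y)"
  using assms by (intro eq_matI) (auto simp: compl_mat_def join_mat_def ones_mat_def)

lemma char_poly_compl_join_mat:
  assumes "X \<in> carrier_mat n n" and "Y \<in> carrier_mat m m"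
  shows "char_poly (compl_mat (join_mat X Y)) = char_poly (compl_mat X) * char_poly (compl_mat Y)"
  using assms by (simp add: compl_mat_join_mat char_poly_four_block_mat_diag)

lemma char_poly_join_mat:
  assumes X: "X \<in> carrier_mat n n" and Y: "Y \<in> carrier_mat m m"
  shows "char_poly (join_mat X Y) = char_poly X * char_poly Y
    - (char_poly (- compl_mat X) - char_poly X) * (char_poly (- compl_mat Y) - char_poly Y)"
proof (rule poly_eqI_off_roots)
  show "char_poly X * char_poly Y \<noteq> 0" using X Y by (simp add: char_poly_nonzero)
  fix s
  assume "poly (char_poly X * char_poly Y) s \<noteq> 0"
  then have "det (s \<cdot>\<^sub>m 1\<^sub>m n - X) \<noteq> 0" and "det (s \<cdot>\<^sub>m 1\<^sub>m m - Y) \<noteq> 0"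
    by (auto simp: poly_char_poly_eq_det[OF X] poly_char_poly_eq_det[OF Y])
  have plus_ones: "det (s \<cdot>\<^sub>m 1\<^sub>m k - A + ones_mat k k) = poly (char_poly (- compl_mat A)) s"
    if "A \<in> carrier_mat k k" for A k
  proof -
    have "s \<cdot>\<^sub>m 1\<^sub>m k - A + ones_mat k k = s \<cdot>\<^sub>m 1\<^sub>m k - - compl_mat A"
      using that by (intro eq_matI) (auto simp: compl_mat_def ones_mat_def)
    then show ?thesis using that by (simp add: poly_char_poly_eq_det[of _ k])
  qed
  have "s \<cdot>\<^sub>m 1\<^sub>m (n + m) - join_mat X Y
    = four_block_mat (s \<cdot>\<^sub>m 1\<^sub>m n - X) (- ones_mat n m) (- ones_mat m n) (s \<cdot>\<^sub>m 1\<^sub>m m - Y)"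
    using X Y by (intro eq_matI) (auto simp: join_mat_def ones_mat_def)
  then have "poly (char_poly (join_mat X Y)) s
      = det (four_block_mat (s \<cdot>\<^sub>m 1\<^sub>m n - X) (- ones_mat n m) (- ones_mat m n) (s \<cdot>\<^sub>m 1\<^sub>m m - Y))"
    by (simp add: poly_char_poly_eq_det[OF join_mat_carrier[OF X Y]])
  also have "\<dots> = det (s \<cdot>\<^sub>m 1\<^sub>m n - X) * det (s \<cdot>\<^sub>m 1\<^sub>m m - Y)
      - (det (s \<cdot>\<^sub>m 1\<^sub>m n - X + ones_mat n n) - det (s \<cdot>\<^sub>m 1\<^sub>m n - X))
      * (det (s \<cdot>\<^sub>m 1\<^sub>m m - Y + ones_mat m m) - det (s \<cdot>\<^sub>m 1\<^sub>m m - Y))"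
    by (rule det_four_block_mat_minus_ones) (use X Y \<open>det (s \<cdot>\<^sub>m 1\<^sub>m n - X) \<noteq> 0\<close>
        \<open>det (s \<cdot>\<^sub>m 1\<^sub>m m - Y) \<noteq> 0\<close> in auto)
  finally show "poly (char_poly (join_mat X Y)) s = poly (char_poly X * char_poly Y
    - (char_poly (- compl_mat X) - char_poly X) * (char_poly (- compl_mat Y) - char_poly Y)) s"
    by (simp add: plus_ones X Y poly_char_poly_eq_det[OF X] poly_char_poly_eq_det[OF Y])
qed

lemma char_poly_eq_prod_spec_mset:
  assumes "A \<in> carrier_mat n n"
  shows "char_poly A = (\<Prod>x\<in>#spec_mset A. [:- x, 1:])"
  using complex_poly_decompose_multiset[of "char_poly A"] degree_monic_char_poly[OF assms]
  unfolding spec_mset_def by simp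

lemma char_poly_eq_if_spec_mset_eq:
  assumes "spec_mset A = spec_mset B" and "A \<in> carrier_mat n n" and "B \<in> carrier_mat k k"
  shows "char_poly A = char_poly B"
  using assms char_poly_eq_prod_spec_mset[of A n] char_poly_eq_prod_spec_mset[of B k] by simp

lemma char_polys_join_mat_eqI:
  assumes X: "X \<in> carrier_mat n n" and Y: "Y \<in> carrier_mat m m"
    and X': "X' \<in> carrier_mat n' n'" and Y': "Y' \<in> carrier_mat m' m'"
    and "char_poly X = char_poly X'" and cX: "char_poly (compl_mat X) = char_poly (compl_mat X')"
    and "char_poly Y = char_poly Y'" and cY: "char_poly (compl_mat Y) = char_poly (compl_mat Y')"
  shows "char_poly (join_mat X Y) = char_poly (join_mat X' Y')"
    and "char_poly (compl_mat (join_mat X Y)) = char_poly (compl_mat (join_mat X' Y'))"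
  using assms char_poly_uminus_eq[OF compl_mat_carrier[OF X] compl_mat_carrier[OF X'] cX]
    char_poly_uminus_eq[OF compl_mat_carrier[OF Y] compl_mat_carrier[OF Y'] cY]
  by (simp_all add: char_poly_join_mat[OF X Y] char_poly_join_mat[OF X' Y']
      char_poly_compl_join_mat[OF X Y] char_poly_compl_join_mat[OF X' Y'])

lemma char_polys_join_mat_cancel:
  assumes X: "X \<in> carrier_mat n n" and Y: "Y \<in> carrier_mat m m"
    and X': "X' \<in> carrier_mat n' n'" and Y': "Y' \<in> carrier_mat m' m'"
    and join: "char_poly (join_mat X Y) = char_poly (join_mat X' Y')"
    and compl_join: "char_poly (compl_mat (join_mat X Y)) = char_poly (compl_mat (join_mat X' Y'))"
    and Y_eq: "char_poly Y = char_poly Y'" and cY: "char_poly (compl_mat Y) = char_poly (compl_mat Y')"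
  shows "char_poly X = char_poly X'" and "char_poly (compl_mat X) = char_poly (compl_mat X')"
proof -
  show cX: "char_poly (compl_mat X) = char_poly (compl_mat X')"
    using compl_join cY char_poly_nonzero[OF compl_mat_carrier[OF Y']]
    unfolding char_poly_compl_join_mat[OF X Y] char_poly_compl_join_mat[OF X' Y'] by simp
  have "char_poly X * char_poly (- compl_mat Y) = char_poly X' * char_poly (- compl_mat Y)"
    using join Y_eq char_poly_uminus_eq[OF compl_mat_carrier[OF X] compl_mat_carrier[OF X'] cX]
      char_poly_uminus_eq[OF compl_mat_carrier[OF Y] compl_mat_carrier[OF Y'] cY]
    unfolding char_poly_join_mat[OF X Y] char_poly_join_mat[OF X' Y'] by (simp add: algebra_simps)
  then show "char_poly X = char_poly X'"
    using char_poly_nonzero[OF uminus_carrier_mat[OF compl_mat_carrier[OF Y]]] by simp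
qed

theorem lemma3p1:
  fixes X Y X' Y' :: "complex mat" and n m n' m' :: nat
  assumes "X \<in> carrier_mat n n" and "Y \<in> carrier_mat m m"
    and "X' \<in> carrier_mat n' n'" and "Y' \<in> carrier_mat m' m'"
  shows "(spec_mset X = spec_mset X' \<and> spec_mset (compl_mat X) = spec_mset (compl_mat X') \<and>
          spec_mset Y = spec_mset Y' \<and> spec_mset (compl_mat Y) = spec_mset (compl_mat Y')
          \<longrightarrow> spec_mset (join_mat X Y) = spec_mset (join_mat X' Y') \<and>
              spec_mset (compl_mat (join_mat X Y)) = spec_mset (compl_mat (join_mat X' Y')))
       \<and> (spec_mset (join_mat X Y) = spec_mset (join_mat X' Y') \<and>
          spec_mset (compl_mat (join_mat X Y)) = spec_mset (compl_mat (join_mat X' Y')) \<and>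
          spec_mset Y = spec_mset Y' \<and> spec_mset (compl_mat Y) = spec_mset (compl_mat Y')
          \<longrightarrow> spec_mset X = spec_mset X' \<and>
              spec_mset (compl_mat X) = spec_mset (compl_mat X'))"
proof -
  note X = assms(1) and Y = assms(2) and X' = assms(3) and Y' = assms(4)
  note J = join_mat_carrier[OF X Y] and J' = join_mat_carrier[OF X' Y']
  note cp_eq = char_poly_eq_if_spec_mset_eq
  show ?thesis
    using char_polys_join_mat_eqI[OF X Y X' Y'] char_polys_join_mat_cancel[OF X Y X' Y']
      cp_eq[OF _ X X'] cp_eq[OF _ compl_mat_carrier[OF X] compl_mat_carrier[OF X']]
      cp_eq[OF _ Y Y'] cp_eq[OF _ compl_mat_carrier[OF Y] compl_mat_carrier[OF Y']]
      cp_eq[OF _ J J'] cp_eq[OF _ compl_mat_carrier[OF J] compl_mat_carrier[OF J']]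
    unfolding spec_mset_def by metis
qed

end
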